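(* Suppose $\beta>1$ and $T<\infty$. If $(a_n)$ satisfies $n^{1/2}/a_n\to0$, then \[\sup_{t\le T}\Big|\sum_{j=2}^{\lfloor nt\rfloor}\frac{\chi_j^-}{a_n}\Big|\] converges in probability to $0$ as $n\to\infty$.
   Context: Let $(Y_k)_{k\ge0}$ be a random walk on $\mathbb{Z}$ with $Y_0=0$ stepping to $y-1$ with probability $1/(\beta+1)$ and to $y+1$ with probability $\beta/(\beta+1)$. Let $\upsilon_\beta=(\beta-1)/(\beta+1)$. Regeneration times: $\zeta^Y_0=0$ and for $j\ge1$, $\zeta^Y_j:=\inf\{m>\zeta^Y_{j-1}:\{Y_r\}_{r=0}^{m-1}\cap\{Y_r\}_{r=m}^\infty=\emptyset\}$; regeneration points $\varrho_j:=Y_{\zeta^Y_j}$ (with $\varrho_0=0$). Define $\chi^-_j:=\upsilon_\beta(\zeta^Y_j-\zeta^Y_{j-1})-(\varrho_j-\varrho_{j-1})$. *)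

theory Defs
  imports "HOL-Probability.Probability"
begin

definition walk :: "(nat \<Rightarrow> 'a \<Rightarrow> int) \<Rightarrow> 'a \<Rightarrow> nat \<Rightarrow> int" where
  "walk X \<omega> m = (\<Sum>k<m. X k \<omega>)"

definition is_regen :: "(nat \<Rightarrow> int) \<Rightarrow> nat \<Rightarrow> bool" where
  "is_regen Y m \<longleftrightarrow> Y ` {..<m} \<inter> Y ` {m..} = {}"

text \<open>Regeneration times zeta_j (Inf of the empty set of naturals is 0 in Isabelle).\<close>
fun regen_time :: "(nat \<Rightarrow> int) \<Rightarrow> nat \<Rightarrow> nat" where
  "regen_time Y 0 = 0"
| "regen_time Y (Suc j) = Inf {m. regen_time Y j < m \<and> is_regen Y m}"

definition regen_point :: "(nat \<Rightarrow> int) \<Rightarrow> nat \<Rightarrow> int" where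
  "regen_point Y j = Y (regen_time Y j)"

definition upsilon :: "real \<Rightarrow> real" where
  "upsilon \<beta> = (\<beta> - 1) / (\<beta> + 1)"

definition chi_minus :: "real \<Rightarrow> (nat \<Rightarrow> int) \<Rightarrow> nat \<Rightarrow> real" where
  "chi_minus \<beta> Y j =
     upsilon \<beta> * (real (regen_time Y j) - real (regen_time Y (j - 1)))
     - real_of_int (regen_point Y j - regen_point Y (j - 1))"

end

theory Submission
  imports Defs
begin

text \<open>
  Since \<open>\<chi>\<^sup>-\<^sub>j = D(\<zeta>\<^sub>j) - D(\<zeta>\<^sub>j\<^sub>-\<^sub>1)\<close> with \<open>D(m) = \<upsilon> m - Y\<^sub>m\<close>, the sum over \<open>2 \<le> j \<le> K\<close>
  telescopes, and the supremum over \<open>t \<le> T\<close> is at most \<open>2 max\<^sub>m\<^sub>\<le>\<^sub>N |Y\<^sub>m - \<upsilon> m| / a\<^sub>n\<close>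
  as soon as \<open>\<lfloor>nT\<rfloor>\<close> regeneration times occur up to time \<open>N\<close>. Take \<open>N = 2JL\<close> with
  \<open>L\<close> proportional to \<open>n\<close>. By Kolmogorov's maximal inequality, \<open>|Y\<^sub>m - \<upsilon> m|\<close> reaches
  \<open>\<epsilon> a\<^sub>n / 2\<close> before \<open>N\<close> with probability \<open>O(n / a\<^sub>n\<^sup>2)\<close>. For the regeneration times,
  cut \<open>[0, N)\<close> into \<open>L\<close> windows of length \<open>2J\<close>. A window consists of up-steps only
  with probability \<open>q = p\<^sup>2\<^sup>J\<close>, so by the second moment method fewer than \<open>Lq/2\<close> windows
  do so with probability \<open>O(1/(Lq))\<close>. The midpoint of such a window is a regeneration
  time unless the walk backtracks by \<open>J\<close> before or after the window; the backtracking
  depends only on the steps outside the window and, by Hoeffding's inequality, has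
  probability at most \<open>\<delta>\<^sub>J \<rightarrow> 0\<close>. By Markov's inequality, at least \<open>Lq/4\<close> windows both
  climb and backtrack with probability at most \<open>4 \<delta>\<^sub>J\<close>.
\<close>

section \<open>Regeneration times of integer paths\<close>

lemma is_regen_iff: "is_regen Y m \<longleftrightarrow> (\<forall>r<m. \<forall>r'\<ge>m. Y r \<noteq> Y r')"
  unfolding is_regen_def by (auto simp: disjoint_iff)

definition backtracks :: "(nat \<Rightarrow> int) \<Rightarrow> nat \<Rightarrow> nat \<Rightarrow> nat \<Rightarrow> bool" where
  "backtracks Y s t J \<longleftrightarrow> (\<exists>r<s. Y s + int J \<le> Y r) \<or> (\<exists>r>t. Y r + int J \<le> Y t)"

lemma is_regen_mid_climb:
  assumes climb: "\<And>i. i \<le> 2 * J \<Longrightarrow> Y (s + i) = Y s + int i"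
    and no_backtrack: "\<not> backtracks Y s (s + 2 * J) J"
  shows "is_regen Y (s + J)"
proof -
  have below: "Y r < Y s + int J" if "r < s + J" for r
  proof (cases "r < s")
    case True
    then show ?thesis using no_backtrack by (auto simp: backtracks_def)
  next
    case False
    then show ?thesis using that climb[of "r - s"] by simp
  qed
  have above: "Y s + int J \<le> Y r" if "s + J \<le> r" for r
  proof (cases "r \<le> s + 2 * J")
    case True
    then show ?thesis using that climb[of "r - s"] by simp
  next
    case False
    then have "\<not> Y r + int J \<le> Y (s + 2 * J)"
      using no_backtrack by (auto simp: backtracks_def)
    then show ?thesis using climb[of "2 * J"] by simp
  qed
  show ?thesis
    unfolding is_regen_iff by (metis below above not_le order.strict_iff_not)
qed

lemma card_climbs_le:
  assumes "1 \<le> J"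
    and climb: "\<And>l i. C l \<Longrightarrow> i \<le> 2 * J \<Longrightarrow> Y (2 * J * l + i) = Y (2 * J * l) + int i"
  shows "card {l\<in>{..<L}. C l}
    \<le> card {l\<in>{..<L}. C l \<and> backtracks Y (2 * J * l) (2 * J * l + 2 * J) J}
      + card {m\<in>{1..2 * J * L}. is_regen Y m}"
proof -
  let ?backtracking = "{l\<in>{..<L}. C l \<and> backtracks Y (2 * J * l) (2 * J * l + 2 * J) J}"
  let ?clean = "{l\<in>{..<L}. C l \<and> \<not> backtracks Y (2 * J * l) (2 * J * l + 2 * J) J}"
  have "card ?clean \<le> card {m\<in>{1..2 * J * L}. is_regen Y m}"
  proof (rule card_inj_on_le)
    show "inj_on (\<lambda>l. 2 * J * l + J) ?clean"
      using \<open>1 \<le> J\<close> by (auto simp: inj_on_def)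
    show "(\<lambda>l. 2 * J * l + J) ` ?clean \<subseteq> {m\<in>{1..2 * J * L}. is_regen Y m}"
    proof safe
      fix l assume l: "l < L" "C l" "\<not> backtracks Y (2 * J * l) (2 * J * l + 2 * J) J"
      have "2 * J * (l + 1) \<le> 2 * J * L"
        using l by (intro mult_le_mono2) auto
      then show "2 * J * l + J \<in> {1..2 * J * L}"
        using \<open>1 \<le> J\<close> by auto
      show "is_regen Y (2 * J * l + J)"
        using l climb by (intro is_regen_mid_climb) auto
    qed
  qed simp
  moreover have "{l\<in>{..<L}. C l} = ?backtracking \<union> ?clean"
    by auto
  then have "card {l\<in>{..<L}. C l} \<le> card ?backtracking + card ?clean"
    using card_Un_le[of ?backtracking ?clean] by (simp only:)
  ultimately show ?thesis by linarith
qed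

lemma regen_time_Suc:
  assumes "regen_time Y j < m" "is_regen Y m"
  shows "regen_time Y j < regen_time Y (Suc j)" "is_regen Y (regen_time Y (Suc j))"
    "regen_time Y (Suc j) \<le> m"
    and "\<And>x. x < regen_time Y (Suc j) \<Longrightarrow> is_regen Y x \<Longrightarrow> x \<le> regen_time Y j"
proof -
  have least: "regen_time Y (Suc j) = (LEAST x. regen_time Y j < x \<and> is_regen Y x)"
    by (simp add: Inf_nat_def)
  show "regen_time Y j < regen_time Y (Suc j)" "is_regen Y (regen_time Y (Suc j))"
    using LeastI[of "\<lambda>x. regen_time Y j < x \<and> is_regen Y x" m] assms unfolding least by auto
  show "regen_time Y (Suc j) \<le> m"
    unfolding least using assms by (auto intro: Least_le)
  show "x \<le> regen_time Y j" if "x < regen_time Y (Suc j)" "is_regen Y x" for x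
    using that not_less_Least[of x "\<lambda>x. regen_time Y j < x \<and> is_regen Y x"]
    unfolding least by auto
qed

lemma regen_time_le_if_card_ge:
  assumes "j \<le> card {m\<in>{1..M}. is_regen Y m}"
  shows "regen_time Y j \<le> M"
proof -
  let ?R = "{m\<in>{1..M}. is_regen Y m}"
  have "regen_time Y j \<le> M \<and> card {m\<in>?R. m \<le> regen_time Y j} = j"
    using assms
  proof (induction j)
    case 0
    have "{m\<in>?R. m \<le> 0} = {}" by auto
    then show ?case by simp
  next
    case (Suc j)
    let ?z = "regen_time Y j" and ?z' = "regen_time Y (Suc j)"
    from Suc have IH: "card {m\<in>?R. m \<le> ?z} = j" by simp
    have "\<not> ?R \<subseteq> {m\<in>?R. m \<le> ?z}"
      using IH Suc.prems card_mono[of "{m\<in>?R. m \<le> ?z}" ?R] by auto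
    then obtain m where "m \<in> ?R" "\<not> m \<le> ?z" by blast
    then have m: "m \<le> M" "?z < m" "is_regen Y m" by simp_all
    note z' = regen_time_Suc[OF m(2,3)]
    have "?z' \<le> M" using z'(3) m(1) by simp
    have "{m\<in>?R. m \<le> ?z'} = insert ?z' {m\<in>?R. m \<le> ?z}"
    proof (intro set_eqI iffI)
      fix x assume "x \<in> {m\<in>?R. m \<le> ?z'}"
      then show "x \<in> insert ?z' {m\<in>?R. m \<le> ?z}"
        using z'(4)[of x] by (cases "x = ?z'") auto
    next
      fix x assume "x \<in> insert ?z' {m\<in>?R. m \<le> ?z}"
      then show "x \<in> {m\<in>?R. m \<le> ?z'}"
        using z'(1,2) \<open>?z' \<le> M\<close> by auto
    qed
    moreover have "?z' \<notin> {m\<in>?R. m \<le> ?z}" using z'(1) by simp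
    ultimately show ?case using IH \<open>?z' \<le> M\<close> by simp
  qed
  then show ?thesis ..
qed

lemma sum_chi_minus_telescope:
  assumes "1 \<le> K"
  shows "(\<Sum>j\<in>{2..K}. chi_minus \<beta> Y j)
    = (upsilon \<beta> * real (regen_time Y K) - real_of_int (Y (regen_time Y K)))
      - (upsilon \<beta> * real (regen_time Y 1) - real_of_int (Y (regen_time Y 1)))"
  using assms
proof (induction K rule: dec_induct)
  case (step K)
  have "{2..Suc K} = insert (Suc K) {2..K}" using step.hyps by auto
  then show ?case
    using step.IH by (simp add: chi_minus_def regen_point_def algebra_simps)
qed simp

lemma abs_sum_chi_minus_le:
  assumes card: "K \<le> card {m\<in>{1..M}. is_regen Y m}"
    and dev: "\<And>m. m \<le> M \<Longrightarrow> \<bar>real_of_int (Y m) - upsilon \<beta> * real m\<bar> \<le> c"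
  shows "\<bar>\<Sum>j\<in>{2..K}. chi_minus \<beta> Y j\<bar> \<le> 2 * c"
proof (cases "2 \<le> K")
  case False
  then have "{2..K} = {}" by auto
  then show ?thesis using dev[of 0] by simp
next
  case True
  have "regen_time Y K \<le> M"
    using card by (rule regen_time_le_if_card_ge)
  moreover have "regen_time Y 1 \<le> M"
    using True card by (intro regen_time_le_if_card_ge) linarith
  ultimately show ?thesis
    using True sum_chi_minus_telescope[of K \<beta> Y] dev[of "regen_time Y K"] dev[of "regen_time Y 1"]
    by (simp add: abs_le_iff)
qed

lemma SUP_sum_chi_minus_le:
  assumes card: "real n * T \<le> real (card {m\<in>{1..M}. is_regen Y m})" and "0 \<le> T"
    and dev: "\<And>m. m \<le> M \<Longrightarrow> \<bar>real_of_int (Y m) - upsilon \<beta> * real m\<bar> \<le> c"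
  shows "(SUP t\<in>{0..T}. \<bar>\<Sum>j\<in>{2..nat \<lfloor>real n * t\<rfloor>}. chi_minus \<beta> Y j / a\<bar>) \<le> 2 * c / \<bar>a\<bar>"
proof (rule cSUP_least)
  show "{0..T} \<noteq> {}" using \<open>0 \<le> T\<close> by simp
next
  fix t assume "t \<in> {0..T}"
  then have "real (nat \<lfloor>real n * t\<rfloor>) \<le> real n * t" "real n * t \<le> real n * T"
    by (auto intro: mult_left_mono)
  then have "real (nat \<lfloor>real n * t\<rfloor>) \<le> real (card {m\<in>{1..M}. is_regen Y m})"
    using card by linarith
  then have "\<bar>\<Sum>j\<in>{2..nat \<lfloor>real n * t\<rfloor>}. chi_minus \<beta> Y j\<bar> \<le> 2 * c"
    using dev by (intro abs_sum_chi_minus_le[where M = M]) auto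
  then show "\<bar>\<Sum>j\<in>{2..nat \<lfloor>real n * t\<rfloor>}. chi_minus \<beta> Y j / a\<bar> \<le> 2 * c / \<bar>a\<bar>"
    by (simp add: sum_divide_distrib[symmetric] abs_divide divide_right_mono)
qed

lemma tendsto_0_if_eventually_le_plus_tendsto_0:
  fixes f :: "nat \<Rightarrow> real"
  assumes nonneg: "\<And>n. 0 \<le> f n"
    and approx: "\<And>\<gamma>. 0 < \<gamma> \<Longrightarrow> \<exists>g. g \<longlonglongrightarrow> 0 \<and> (\<forall>\<^sub>F n in sequentially. f n \<le> \<gamma> + g n)"
  shows "f \<longlonglongrightarrow> 0"
proof (rule order_tendstoI)
  fix y :: real assume "y < 0"
  then have "y < f n" for n
    using nonneg[of n] by linarith
  then show "\<forall>\<^sub>F n in sequentially. y < f n"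
    by (intro always_eventually allI)
next
  fix y :: real assume "0 < y"
  then obtain g where g: "g \<longlonglongrightarrow> 0" "\<forall>\<^sub>F n in sequentially. f n \<le> y / 2 + g n"
    using approx[of "y / 2"] by auto
  have "\<forall>\<^sub>F n in sequentially. g n < y / 2"
    using order_tendstoD(2)[OF g(1), of "y / 2"] \<open>0 < y\<close> by simp
  with g(2) show "\<forall>\<^sub>F n in sequentially. f n < y"
    by eventually_elim simp
qed

lemma measurable_sum_components:
  fixes f :: "'b \<Rightarrow> real"
  assumes "finite W" "W \<subseteq> I" "\<And>i. i \<in> W \<Longrightarrow> f \<in> borel_measurable (N i)"
  shows "(\<lambda>x. \<Sum>i\<in>W. f (x i)) \<in> borel_measurable (PiM I N)"
proof (intro borel_measurable_sum)
  fix i assume "i \<in> W"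
  with assms have "(\<lambda>x. x i) \<in> measurable (PiM I N) (N i)" "f \<in> borel_measurable (N i)"
    by (auto intro: measurable_component_singleton)
  then show "(\<lambda>x. f (x i)) \<in> borel_measurable (PiM I N)"
    by (rule measurable_compose)
qed

lemma measurable_sum_lessThan_components:
  fixes j k :: nat
  shows "j \<le> k \<Longrightarrow> (\<lambda>x. \<Sum>i<j. x i :: real) \<in> borel_measurable (PiM {..<k} (\<lambda>_. borel))"
  by (intro borel_measurable_sum measurable_component_singleton) auto

lemma (in finite_measure) measure_UN_le_geometric:
  fixes A :: "nat \<Rightarrow> 'a set"
  assumes sets: "\<And>d. d \<in> D \<Longrightarrow> A d \<in> sets M"
    and bound: "\<And>d. d \<in> D \<Longrightarrow> measure M (A d) \<le> C * x ^ d"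
    and "0 \<le> C" "0 \<le> x" "x < 1"
  shows "measure M (\<Union>d\<in>D. A d) \<le> C / (1 - x)"
proof -
  define A' where "A' d = (if d \<in> D then A d else {})" for d
  have A'_sets: "range A' \<subseteq> sets M"
    using sets by (auto simp: A'_def)
  have A'_bound: "measure M (A' d) \<le> C * x ^ d" for d
    using bound \<open>0 \<le> C\<close> \<open>0 \<le> x\<close> by (simp add: A'_def)
  have geometric: "summable (\<lambda>d. C * x ^ d)"
    using \<open>0 \<le> x\<close> \<open>x < 1\<close> by (intro summable_mult summable_geometric) simp
  have summable: "summable (\<lambda>d. measure M (A' d))"
    using A'_bound by (intro summable_comparison_test[OF _ geometric]) auto
  have "(\<Union>d\<in>D. A d) = (\<Union>d. A' d)"
    by (auto simp: A'_def split: if_splits)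
  also have "measure M \<dots> \<le> (\<Sum>d. measure M (A' d))"
    by (rule finite_measure_subadditive_countably[OF A'_sets summable])
  also have "\<dots> \<le> (\<Sum>d. C * x ^ d)"
    by (rule suminf_le[OF A'_bound summable geometric])
  also have "\<dots> = C / (1 - x)"
    using \<open>0 \<le> x\<close> \<open>x < 1\<close> by (simp add: suminf_mult suminf_geometric)
  finally show ?thesis .
qed

section \<open>Bounded random variables and counts of events\<close>

named_theorems bounded_rv_intros

context prob_space
begin

text \<open>Closed under sums and products, so that the rules \<open>bounded_rv_intros\<close> discharge the
  integrability side conditions below.\<close>

definition bounded_rv :: "('a \<Rightarrow> real) \<Rightarrow> bool" where
  "bounded_rv f \<longleftrightarrow> f \<in> borel_measurable M \<and> (\<exists>B. AE \<omega> in M. \<bar>f \<omega>\<bar> \<le> B)"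

lemma bounded_rv_integrable:
  assumes "bounded_rv f"
  shows "integrable M f"
proof -
  from assms obtain B where "f \<in> borel_measurable M" "AE \<omega> in M. \<bar>f \<omega>\<bar> \<le> B"
    by (auto simp: bounded_rv_def)
  then show ?thesis
    by (intro integrable_const_bound[where B = B]) auto
qed

lemma bounded_rv_const [bounded_rv_intros]: "bounded_rv (\<lambda>\<omega>. c)"
  unfolding bounded_rv_def by (intro conjI exI[of _ "\<bar>c\<bar>"] AE_I2) simp_all

lemma bounded_rv_indicator [bounded_rv_intros]: "A \<in> events \<Longrightarrow> bounded_rv (indicator A)"
  unfolding bounded_rv_def
  by (intro conjI exI[of _ 1] AE_I2 borel_measurable_indicator) (simp_all add: indicator_def)

lemma bounded_rv_binop:
  assumes "bounded_rv f" "bounded_rv g"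
    and "\<And>f g. f \<in> borel_measurable M \<Longrightarrow> g \<in> borel_measurable M \<Longrightarrow> (\<lambda>\<omega>. h (f \<omega>) (g \<omega>)) \<in> borel_measurable M"
    and "\<And>x y B1 B2. \<bar>x\<bar> \<le> B1 \<Longrightarrow> \<bar>y\<bar> \<le> B2 \<Longrightarrow> \<bar>h x y\<bar> \<le> k B1 B2"
  shows "bounded_rv (\<lambda>\<omega>. h (f \<omega>) (g \<omega>))"
proof -
  from assms(1,2) obtain B1 B2 where "AE \<omega> in M. \<bar>f \<omega>\<bar> \<le> B1" "AE \<omega> in M. \<bar>g \<omega>\<bar> \<le> B2"
    unfolding bounded_rv_def by blast
  then have "AE \<omega> in M. \<bar>h (f \<omega>) (g \<omega>)\<bar> \<le> k B1 B2"
    by eventually_elim (rule assms(4))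
  moreover have "(\<lambda>\<omega>. h (f \<omega>) (g \<omega>)) \<in> borel_measurable M"
    using assms(1,2) by (intro assms(3)) (simp_all add: bounded_rv_def)
  ultimately show ?thesis
    unfolding bounded_rv_def by blast
qed

lemma bounded_rv_add [bounded_rv_intros]:
  "bounded_rv f \<Longrightarrow> bounded_rv g \<Longrightarrow> bounded_rv (\<lambda>\<omega>. f \<omega> + g \<omega>)"
  by (erule bounded_rv_binop[where k = "\<lambda>B1 B2. B1 + B2"]) auto

lemma bounded_rv_diff [bounded_rv_intros]:
  "bounded_rv f \<Longrightarrow> bounded_rv g \<Longrightarrow> bounded_rv (\<lambda>\<omega>. f \<omega> - g \<omega>)"
  by (erule bounded_rv_binop[where k = "\<lambda>B1 B2. B1 + B2"]) auto

lemma bounded_rv_mult [bounded_rv_intros]: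
  "bounded_rv f \<Longrightarrow> bounded_rv g \<Longrightarrow> bounded_rv (\<lambda>\<omega>. f \<omega> * g \<omega>)"
  by (erule bounded_rv_binop[where k = "\<lambda>B1 B2. B1 * B2"]) (auto simp: abs_mult intro: mult_mono')

lemma bounded_rv_power2 [bounded_rv_intros]: "bounded_rv f \<Longrightarrow> bounded_rv (\<lambda>\<omega>. (f \<omega>)\<^sup>2)"
  unfolding power2_eq_square by (rule bounded_rv_mult)

lemma bounded_rv_sum [bounded_rv_intros]:
  "finite I \<Longrightarrow> (\<And>i. i \<in> I \<Longrightarrow> bounded_rv (f i)) \<Longrightarrow> bounded_rv (\<lambda>\<omega>. \<Sum>i\<in>I. f i \<omega>)"
  by (induction I rule: finite_induct) (auto intro: bounded_rv_const bounded_rv_add)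

lemma card_events_eq_sum_indicator:
  "finite I \<Longrightarrow> real (card {i\<in>I. \<omega> \<in> E i}) = (\<Sum>i\<in>I. indicator (E i) \<omega>)"
  by (simp add: indicator_def Int_def)

lemma bounded_rv_card_events [bounded_rv_intros]:
  "finite I \<Longrightarrow> (\<And>i. i \<in> I \<Longrightarrow> E i \<in> events) \<Longrightarrow> bounded_rv (\<lambda>\<omega>. real (card {i\<in>I. \<omega> \<in> E i}))"
  by (simp add: card_events_eq_sum_indicator bounded_rv_intros)

lemma expectation_card_events:
  assumes "finite I" "\<And>i. i \<in> I \<Longrightarrow> E i \<in> events"
  shows "expectation (\<lambda>\<omega>. real (card {i\<in>I. \<omega> \<in> E i})) = (\<Sum>i\<in>I. prob (E i))"
  using assms
  by (simp add: card_events_eq_sum_indicator Bochner_Integration.integral_sum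
      bounded_rv_integrable bounded_rv_intros sets.Int_space_eq2)

lemma variance_card_events_le:
  assumes "finite I" and events: "\<And>i. i \<in> I \<Longrightarrow> E i \<in> events"
    and prob_E: "\<And>i. i \<in> I \<Longrightarrow> prob (E i) = q"
    and pairwise: "\<And>i j. i \<in> I \<Longrightarrow> j \<in> I \<Longrightarrow> i \<noteq> j \<Longrightarrow> prob (E i \<inter> E j) \<le> q\<^sup>2"
  shows "variance (\<lambda>\<omega>. real (card {i\<in>I. \<omega> \<in> E i})) \<le> real (card I) * q"
proof -
  let ?N = "\<lambda>\<omega>. real (card {i\<in>I. \<omega> \<in> E i})"
  have square: "(?N \<omega>)\<^sup>2 = (\<Sum>i\<in>I. \<Sum>j\<in>I. indicator (E i \<inter> E j) \<omega>)" for \<omega>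
    using \<open>finite I\<close> unfolding card_events_eq_sum_indicator[OF \<open>finite I\<close>] power2_eq_square sum_product
    by (simp add: indicator_inter_arith)
  have "expectation (\<lambda>\<omega>. (?N \<omega>)\<^sup>2) = (\<Sum>i\<in>I. \<Sum>j\<in>I. prob (E i \<inter> E j))"
    unfolding square using \<open>finite I\<close> events
    by (simp add: Bochner_Integration.integral_sum bounded_rv_integrable bounded_rv_intros)
  also have "\<dots> \<le> (\<Sum>i\<in>I. \<Sum>j\<in>I. (if i = j then q else 0) + q\<^sup>2)"
    using prob_E pairwise by (intro sum_mono) (auto simp: power2_eq_square)
  also have "\<dots> = real (card I) * q + (real (card I) * q)\<^sup>2"
    using \<open>finite I\<close> by (simp add: sum.distrib power2_eq_square algebra_simps)
  finally show ?thesis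
    using assms by (subst variance_eq)
      (auto simp: expectation_card_events bounded_rv_integrable bounded_rv_intros)
qed

lemma prob_card_events_ge_le:
  assumes "finite I" "\<And>i. i \<in> I \<Longrightarrow> E i \<in> events" "0 < c"
  shows "prob {\<omega>\<in>space M. c \<le> real (card {i\<in>I. \<omega> \<in> E i})} \<le> (\<Sum>i\<in>I. prob (E i)) / c"
proof -
  have "integrable M (\<lambda>\<omega>. real (card {i\<in>I. \<omega> \<in> E i}))"
    by (intro bounded_rv_integrable bounded_rv_card_events) (use assms in auto)
  then have "prob {\<omega>\<in>space M. c \<le> real (card {i\<in>I. \<omega> \<in> E i})}
      \<le> expectation (\<lambda>\<omega>. real (card {i\<in>I. \<omega> \<in> E i})) / c"
    using \<open>0 < c\<close> by (intro integral_Markov_inequality_measure[where A = "space M"]) auto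
  then show ?thesis
    using assms by (simp add: expectation_card_events)
qed

lemma prob_card_events_le_half:
  assumes "finite I" "I \<noteq> {}" "\<And>i. i \<in> I \<Longrightarrow> E i \<in> events"
    and "\<And>i. i \<in> I \<Longrightarrow> prob (E i) = q" "0 < q"
    and "\<And>i j. i \<in> I \<Longrightarrow> j \<in> I \<Longrightarrow> i \<noteq> j \<Longrightarrow> prob (E i \<inter> E j) \<le> q\<^sup>2"
  shows "prob {\<omega>\<in>space M. real (card {i\<in>I. \<omega> \<in> E i}) \<le> real (card I) * q / 2}
    \<le> 4 / (real (card I) * q)"
proof -
  let ?N = "\<lambda>\<omega>. real (card {i\<in>I. \<omega> \<in> E i})" and ?n = "real (card I)"
  have "0 < ?n * q" using assms by (simp add: card_gt_0_iff)
  have bounded: "bounded_rv ?N"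
    by (intro bounded_rv_card_events) (use assms in auto)
  then have [measurable]: "?N \<in> borel_measurable M"
    by (simp add: bounded_rv_def)
  have "integrable M (\<lambda>\<omega>. (?N \<omega>)\<^sup>2)"
    by (intro bounded_rv_integrable bounded_rv_power2 bounded)
  have mean: "expectation ?N = ?n * q"
    using assms by (simp add: expectation_card_events)
  have "{\<omega>\<in>space M. ?N \<omega> \<le> ?n * q / 2} \<subseteq> {\<omega>\<in>space M. ?n * q / 2 \<le> \<bar>?N \<omega> - expectation ?N\<bar>}"
    using \<open>0 < ?n * q\<close> by (auto simp: mean abs_if mult.commute)
  then have "prob {\<omega>\<in>space M. ?N \<omega> \<le> ?n * q / 2} \<le> prob {\<omega>\<in>space M. ?n * q / 2 \<le> \<bar>?N \<omega> - expectation ?N\<bar>}"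
    by (rule finite_measure_mono) measurable
  also have "\<dots> \<le> variance ?N / (?n * q / 2)\<^sup>2"
    using \<open>0 < ?n * q\<close> \<open>integrable M (\<lambda>\<omega>. (?N \<omega>)\<^sup>2)\<close> by (intro Chebyshev_inequality) auto
  also have "\<dots> \<le> (?n * q) / (?n * q / 2)\<^sup>2"
    using variance_card_events_le[of I E q] assms by (intro divide_right_mono) auto
  also have "\<dots> = 4 / (?n * q)"
    using \<open>0 < ?n * q\<close> by (simp add: power2_eq_square field_simps)
  finally show ?thesis .
qed

lemma sum_expectation_indicator_le:
  assumes "disjoint_family_on A I" "finite I" "\<And>i. i \<in> I \<Longrightarrow> A i \<in> events"
    and "bounded_rv f" "\<And>\<omega>. 0 \<le> f \<omega>"
  shows "(\<Sum>i\<in>I. expectation (\<lambda>\<omega>. indicator (A i) \<omega> * f \<omega>)) \<le> expectation f"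
proof -
  have "(\<Sum>i\<in>I. expectation (\<lambda>\<omega>. indicator (A i) \<omega> * f \<omega>))
      = expectation (\<lambda>\<omega>. (\<Sum>i\<in>I. indicator (A i) \<omega>) * f \<omega>)"
    unfolding sum_distrib_right
    by (rule Bochner_Integration.integral_sum[symmetric]) (auto intro!: bounded_rv_integrable bounded_rv_intros assms)
  also have "\<dots> \<le> expectation f"
  proof (rule integral_mono)
    fix \<omega>
    have "(\<Sum>i\<in>I. indicator (A i) \<omega>) = (indicator (\<Union>i\<in>I. A i) \<omega> :: real)"
      using assms(1,2) by (simp add: indicator_UN_disjoint)
    then show "(\<Sum>i\<in>I. indicator (A i) \<omega>) * f \<omega> \<le> f \<omega>"
      using assms(5)[of \<omega>] by (simp add: indicator_def)
  qed (auto intro!: bounded_rv_integrable bounded_rv_intros assms)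
  finally show ?thesis .
qed

lemma prob_sum_le_neg_le_exp:
  fixes Y :: "'i \<Rightarrow> 'a \<Rightarrow> real"
  assumes indep: "indep_vars (\<lambda>_. borel) Y W" and "finite W" "W \<noteq> {}"
    and bounded: "\<And>i. i \<in> W \<Longrightarrow> AE \<omega> in M. Y i \<omega> \<in> {-1..1}"
    and mean: "\<And>i. i \<in> W \<Longrightarrow> expectation (Y i) = \<mu>"
    and "0 \<le> \<mu>" "0 \<le> s"
  shows "prob {\<omega>\<in>space M. (\<Sum>i\<in>W. Y i \<omega>) \<le> - s} \<le> exp (- s * \<mu>) * exp (- \<mu>\<^sup>2 / 2) ^ card W"
proof -
  interpret Hoeffding_ineq M W Y "\<lambda>_. -1" "\<lambda>_. 1" "\<Sum>i\<in>W. expectation (Y i)"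
    using indep bounded \<open>finite W\<close> by unfold_locales auto
  define d where "d = real (card W)"
  have "0 < d" using \<open>finite W\<close> \<open>W \<noteq> {}\<close> by (simp add: d_def card_gt_0_iff)
  have "(\<Sum>i\<in>W. expectation (Y i)) = d * \<mu>" using mean by (simp add: d_def)
  then have "prob {\<omega>\<in>space M. (\<Sum>i\<in>W. Y i \<omega>) \<le> - s}
      = prob {\<omega>\<in>space M. (\<Sum>i\<in>W. Y i \<omega>) \<le> (\<Sum>i\<in>W. expectation (Y i)) - (s + d * \<mu>)}"
    by simp
  also have "\<dots> \<le> exp (-2 * (s + d * \<mu>)\<^sup>2 / (\<Sum>i\<in>W. (1 - (-1::real))\<^sup>2))"
    using \<open>0 \<le> s\<close> \<open>0 \<le> \<mu>\<close> \<open>0 < d\<close> \<open>finite W\<close> \<open>W \<noteq> {}\<close>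
    by (intro Hoeffding_ineq_le) (auto simp: card_gt_0_iff)
  also have "\<dots> = exp (- s * \<mu> - d * \<mu>\<^sup>2 / 2 - s\<^sup>2 / (2 * d))"
    using \<open>0 < d\<close> by (simp add: d_def[symmetric] field_simps power2_eq_square)
  also have "\<dots> \<le> exp (- s * \<mu> + d * (- \<mu>\<^sup>2 / 2))"
    using \<open>0 < d\<close> by simp
  also have "\<dots> = exp (- s * \<mu>) * exp (- \<mu>\<^sup>2 / 2) ^ card W"
    unfolding exp_of_nat_mult[symmetric] exp_add[symmetric] by (simp add: d_def)
  finally show ?thesis .
qed

lemma prob_Int_restrict_indep:
  assumes indep: "indep_vars N X I" and "A \<inter> B = {}" "A \<subseteq> I" "B \<subseteq> I"
    and "SA \<in> sets (PiM A N)" "SB \<in> sets (PiM B N)"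
  shows "prob {\<omega>\<in>space M. (\<lambda>i\<in>A. X i \<omega>) \<in> SA \<and> (\<lambda>i\<in>B. X i \<omega>) \<in> SB}
    = prob {\<omega>\<in>space M. (\<lambda>i\<in>A. X i \<omega>) \<in> SA} * prob {\<omega>\<in>space M. (\<lambda>i\<in>B. X i \<omega>) \<in> SB}"
  using indep_varD[OF indep_var_restrict[OF assms(1-4)] assms(5,6)]
  by (simp add: vimage_def Int_def conj_commute conj_left_commute)

end

section \<open>Kolmogorov's maximal inequality\<close>

lemma sets_first_passage:
  fixes k :: nat
  shows "{x\<in>space (PiM {..<k} (\<lambda>_. borel)). t \<le> \<bar>\<Sum>i<k. x i\<bar> \<and> (\<forall>j\<in>{..<k}. \<bar>\<Sum>i<j. x i\<bar> < t)}
    \<in> sets (PiM {..<k} (\<lambda>_. borel :: real measure))"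
proof -
  have "Measurable.pred (PiM {..<k} (\<lambda>_. borel)) (\<lambda>x. \<forall>j\<in>{..<k}. \<bar>\<Sum>i<j. x i :: real\<bar> < t)"
  proof (rule pred_intros_finite)
    fix j assume "j \<in> {..<k}"
    then have [measurable]: "(\<lambda>x. \<Sum>i<j. x i :: real) \<in> borel_measurable (PiM {..<k} (\<lambda>_. borel))"
      using measurable_sum_lessThan_components[of j k] by simp
    show "Measurable.pred (PiM {..<k} (\<lambda>_. borel)) (\<lambda>x. \<bar>\<Sum>i<j. x i\<bar> < t)"
      by measurable
  qed simp
  moreover note measurable_sum_lessThan_components[of k k, measurable]
  ultimately show ?thesis
    by measurable
qed

locale bounded_centred_indep_seq = prob_space +
  fixes Z :: "nat \<Rightarrow> 'a \<Rightarrow> real" and C :: real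
  assumes indep: "indep_vars (\<lambda>_. borel) Z UNIV"
    and AE_bounded: "\<And>i. AE \<omega> in M. \<bar>Z i \<omega>\<bar> \<le> C"
    and centred: "\<And>i. expectation (Z i) = 0"
begin

definition psum :: "nat \<Rightarrow> 'a \<Rightarrow> real" where
  "psum k \<omega> = (\<Sum>i<k. Z i \<omega>)"

lemma Z_measurable [measurable]: "Z i \<in> borel_measurable M"
  using indep by (simp add: indep_vars_def)

lemma psum_measurable [measurable]: "psum k \<in> borel_measurable M"
  unfolding psum_def by measurable

lemma bounded_rv_Z [bounded_rv_intros]: "bounded_rv (Z i)"
  using AE_bounded by (auto simp: bounded_rv_def)

lemma bounded_rv_psum [bounded_rv_intros]: "bounded_rv (psum k)"
  unfolding psum_def by (intro bounded_rv_intros) auto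

lemma psum_diff: "k \<le> m \<Longrightarrow> psum m \<omega> - psum k \<omega> = (\<Sum>i\<in>{k..<m}. Z i \<omega>)"
  unfolding psum_def using sum.atLeastLessThan_concat[of 0 k m "\<lambda>i. Z i \<omega>"]
  by (simp add: lessThan_atLeast0)

lemma expectation_mult_increment:
  assumes "k \<le> m" and g: "g \<in> borel_measurable (PiM {..<k} (\<lambda>_. borel))"
    and f_eq: "\<And>\<omega>. \<omega> \<in> space M \<Longrightarrow> f \<omega> = g (\<lambda>i\<in>{..<k}. Z i \<omega>)"
    and "bounded_rv f"
  shows "expectation (\<lambda>\<omega>. f \<omega> * (psum m \<omega> - psum k \<omega>)) = 0"
proof -
  let ?V = "\<lambda>\<omega>. \<lambda>i\<in>{..<k}. Z i \<omega>" and ?h = "\<lambda>x. \<Sum>i\<in>{k..<m}. x i"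
  have "indep_var borel (g \<circ> ?V) borel (?h \<circ> (\<lambda>\<omega>. \<lambda>i\<in>{k..<m}. Z i \<omega>))"
    by (intro indep_var_compose[OF indep_var_restrict[OF indep]] g
        measurable_sum_components[where f = "\<lambda>y. y"]) auto
  moreover have "?h \<circ> (\<lambda>\<omega>. \<lambda>i\<in>{k..<m}. Z i \<omega>) = (\<lambda>\<omega>. psum m \<omega> - psum k \<omega>)"
    using \<open>k \<le> m\<close> by (simp add: fun_eq_iff psum_diff)
  ultimately have indep_increment: "indep_var borel (\<lambda>\<omega>. g (?V \<omega>)) borel (\<lambda>\<omega>. psum m \<omega> - psum k \<omega>)"
    by (simp add: comp_def)
  have "integrable M f \<longleftrightarrow> integrable M (\<lambda>\<omega>. g (?V \<omega>))"
    by (rule Bochner_Integration.integrable_cong) (simp_all add: f_eq)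
  then have "integrable M (\<lambda>\<omega>. g (?V \<omega>))"
    using bounded_rv_integrable[OF \<open>bounded_rv f\<close>] by simp
  moreover have "integrable M (\<lambda>\<omega>. psum m \<omega> - psum k \<omega>)"
    by (intro bounded_rv_integrable bounded_rv_intros)
  moreover have "expectation (\<lambda>\<omega>. psum m \<omega> - psum k \<omega>) = 0"
    using \<open>k \<le> m\<close> by (simp add: psum_diff bounded_rv_integrable[OF bounded_rv_Z] centred)
  moreover have "expectation (\<lambda>\<omega>. f \<omega> * (psum m \<omega> - psum k \<omega>))
      = expectation (\<lambda>\<omega>. g (?V \<omega>) * (psum m \<omega> - psum k \<omega>))"
    by (rule Bochner_Integration.integral_cong) (simp_all add: f_eq)
  ultimately show ?thesis
    using indep_var_lebesgue_integral[OF indep_increment] by simp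
qed

lemma expectation_psum_squared:
  "expectation (\<lambda>\<omega>. (psum m \<omega>)\<^sup>2) = (\<Sum>i<m. expectation (\<lambda>\<omega>. (Z i \<omega>)\<^sup>2))"
proof (induction m)
  case 0
  then show ?case by (simp add: psum_def)
next
  case (Suc m)
  have psum_Suc: "psum (Suc m) \<omega> = psum m \<omega> + Z m \<omega>" for \<omega>
    by (simp add: psum_def)
  have "expectation (\<lambda>\<omega>. psum m \<omega> * (psum (Suc m) \<omega> - psum m \<omega>)) = 0"
  proof (rule expectation_mult_increment[where g = "\<lambda>x. \<Sum>i<m. x i"])
    show "psum m \<omega> = (\<Sum>i<m. (\<lambda>i\<in>{..<m}. Z i \<omega>) i)" for \<omega>
      by (simp add: psum_def)
  qed (simp_all add: bounded_rv_psum measurable_sum_lessThan_components)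
  then have orthogonal: "expectation (\<lambda>\<omega>. psum m \<omega> * Z m \<omega>) = 0"
    by (simp add: psum_Suc)
  have integrable: "integrable M (\<lambda>\<omega>. (psum m \<omega>)\<^sup>2)" "integrable M (\<lambda>\<omega>. psum m \<omega> * Z m \<omega>)"
    "integrable M (\<lambda>\<omega>. (Z m \<omega>)\<^sup>2)"
    by (intro bounded_rv_integrable bounded_rv_intros)+
  have "expectation (\<lambda>\<omega>. (psum (Suc m) \<omega>)\<^sup>2)
      = expectation (\<lambda>\<omega>. (psum m \<omega>)\<^sup>2 + 2 * (psum m \<omega> * Z m \<omega>) + (Z m \<omega>)\<^sup>2)"
    by (simp add: psum_Suc power2_eq_square algebra_simps)
  also have "\<dots> = expectation (\<lambda>\<omega>. (psum m \<omega>)\<^sup>2) + 2 * expectation (\<lambda>\<omega>. psum m \<omega> * Z m \<omega>)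
      + expectation (\<lambda>\<omega>. (Z m \<omega>)\<^sup>2)"
    using integrable by simp
  finally show ?case
    using Suc.IH orthogonal by simp
qed

lemma expectation_indicator_psum_squared_le:
  assumes "k \<le> m" and B: "B \<in> sets (PiM {..<k} (\<lambda>_. borel))"
    and A_iff: "\<And>\<omega>. \<omega> \<in> A \<longleftrightarrow> \<omega> \<in> space M \<and> (\<lambda>i\<in>{..<k}. Z i \<omega>) \<in> B"
  shows "expectation (\<lambda>\<omega>. indicator A \<omega> * (psum k \<omega>)\<^sup>2) \<le> expectation (\<lambda>\<omega>. indicator A \<omega> * (psum m \<omega>)\<^sup>2)"
proof -
  let ?D = "\<lambda>\<omega>. psum m \<omega> - psum k \<omega>"
  have [measurable]: "B \<in> sets (PiM {..<k} (\<lambda>_. borel))"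
    by (rule B)
  have "A = {\<omega>\<in>space M. (\<lambda>i\<in>{..<k}. Z i \<omega>) \<in> B}"
    using A_iff by auto
  also have "\<dots> \<in> events"
    by measurable
  finally have A_events: "A \<in> events" .
  have "expectation (\<lambda>\<omega>. (indicator A \<omega> * psum k \<omega>) * ?D \<omega>) = 0"
  proof (rule expectation_mult_increment[OF \<open>k \<le> m\<close>, where g = "\<lambda>x. indicator B x * (\<Sum>i<k. x i)"])
    show "(\<lambda>x. indicator B x * (\<Sum>i<k. x i)) \<in> borel_measurable (PiM {..<k} (\<lambda>_. borel))"
      using B measurable_sum_lessThan_components[of k k] by measurable
    show "indicator A \<omega> * psum k \<omega> = indicator B (\<lambda>i\<in>{..<k}. Z i \<omega>) * (\<Sum>i<k. (\<lambda>i\<in>{..<k}. Z i \<omega>) i)"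
      if "\<omega> \<in> space M" for \<omega>
      using that by (simp add: indicator_def A_iff psum_def)
  qed (intro bounded_rv_intros A_events)
  moreover have "0 \<le> expectation (\<lambda>\<omega>. indicator A \<omega> * (?D \<omega>)\<^sup>2)"
    by (intro integral_nonneg_AE) auto
  moreover have "expectation (\<lambda>\<omega>. indicator A \<omega> * (psum m \<omega>)\<^sup>2)
    = expectation (\<lambda>\<omega>. indicator A \<omega> * (psum k \<omega>)\<^sup>2
        + 2 * ((indicator A \<omega> * psum k \<omega>) * ?D \<omega>) + indicator A \<omega> * (?D \<omega>)\<^sup>2)"
    by (rule Bochner_Integration.integral_cong) (simp_all add: power2_eq_square algebra_simps)
  moreover have "\<dots> = expectation (\<lambda>\<omega>. indicator A \<omega> * (psum k \<omega>)\<^sup>2)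
      + 2 * expectation (\<lambda>\<omega>. (indicator A \<omega> * psum k \<omega>) * ?D \<omega>)
      + expectation (\<lambda>\<omega>. indicator A \<omega> * (?D \<omega>)\<^sup>2)"
    using A_events by (simp add: bounded_rv_integrable bounded_rv_intros)
  ultimately show ?thesis by simp
qed

definition first_passage :: "real \<Rightarrow> nat \<Rightarrow> 'a set" where
  "first_passage t k = {\<omega>\<in>space M. t \<le> \<bar>psum k \<omega>\<bar> \<and> (\<forall>j\<in>{..<k}. \<bar>psum j \<omega>\<bar> < t)}"

lemma first_passage_events: "first_passage t k \<in> events"
  unfolding first_passage_def by measurable

lemma disjoint_family_first_passage: "disjoint_family_on (first_passage t) K"
  unfolding disjoint_family_on_def
proof (intro ballI impI)
  fix k l :: nat assume "k \<noteq> l"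
  then show "first_passage t k \<inter> first_passage t l = {}"
    by (cases k l rule: linorder_cases)
       (auto simp: first_passage_def dest: bspec[where x = k] bspec[where x = l])
qed

lemma max_psum_subset_first_passage:
  "{\<omega>\<in>space M. \<exists>k\<le>m. t \<le> \<bar>psum k \<omega>\<bar>} \<subseteq> (\<Union>k\<le>m. first_passage t k)"
proof
  fix \<omega> assume "\<omega> \<in> {\<omega>\<in>space M. \<exists>k\<le>m. t \<le> \<bar>psum k \<omega>\<bar>}"
  then obtain k where k: "\<omega> \<in> space M" "k \<le> m" "t \<le> \<bar>psum k \<omega>\<bar>" by auto
  let ?first = "LEAST k. t \<le> \<bar>psum k \<omega>\<bar>"
  have "t \<le> \<bar>psum ?first \<omega>\<bar>" "?first \<le> k"
    using k(3) by (auto intro: LeastI Least_le)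
  moreover have "\<forall>j\<in>{..<?first}. \<bar>psum j \<omega>\<bar> < t"
    using not_less_Least[where P = "\<lambda>k. t \<le> \<bar>psum k \<omega>\<bar>"] by (auto simp: not_le)
  ultimately show "\<omega> \<in> (\<Union>k\<le>m. first_passage t k)"
    using k by (auto simp: first_passage_def)
qed

lemma prob_first_passage_le:
  assumes "k \<le> m" "0 < t"
  shows "t\<^sup>2 * prob (first_passage t k) \<le> expectation (\<lambda>\<omega>. indicator (first_passage t k) \<omega> * (psum m \<omega>)\<^sup>2)"
proof -
  let ?A = "first_passage t k"
  have "t\<^sup>2 * prob ?A = expectation (\<lambda>\<omega>. t\<^sup>2 * indicator ?A \<omega>)"
    using first_passage_events by (simp add: sets.Int_space_eq2)
  also have "\<dots> \<le> expectation (\<lambda>\<omega>. indicator ?A \<omega> * (psum k \<omega>)\<^sup>2)"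
  proof (rule integral_mono)
    fix \<omega>
    have "t\<^sup>2 \<le> (psum k \<omega>)\<^sup>2" if "\<omega> \<in> ?A"
      using that \<open>0 < t\<close> by (simp add: first_passage_def abs_le_square_iff[symmetric])
    then show "t\<^sup>2 * indicator ?A \<omega> \<le> indicator ?A \<omega> * (psum k \<omega>)\<^sup>2"
      by (simp add: indicator_def)
  qed (auto intro!: bounded_rv_integrable bounded_rv_intros first_passage_events)
  also have "\<dots> \<le> expectation (\<lambda>\<omega>. indicator ?A \<omega> * (psum m \<omega>)\<^sup>2)"
  proof (rule expectation_indicator_psum_squared_le[OF \<open>k \<le> m\<close> sets_first_passage[of k t]])
    fix \<omega>
    have "(\<Sum>i<j. (\<lambda>i\<in>{..<k}. Z i \<omega>) i) = psum j \<omega>" if "j \<le> k" for j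
      using that by (auto simp: psum_def intro!: sum.cong)
    then show "\<omega> \<in> ?A \<longleftrightarrow> \<omega> \<in> space M \<and> (\<lambda>i\<in>{..<k}. Z i \<omega>)
        \<in> {x\<in>space (PiM {..<k} (\<lambda>_. borel)). t \<le> \<bar>\<Sum>i<k. x i\<bar> \<and> (\<forall>j\<in>{..<k}. \<bar>\<Sum>i<j. x i\<bar> < t)}"
      by (auto simp: first_passage_def space_PiM)
  qed
  finally show ?thesis .
qed

theorem kolmogorov_inequality:
  assumes "0 < t"
  shows "prob {\<omega>\<in>space M. \<exists>k\<le>m. t \<le> \<bar>psum k \<omega>\<bar>} \<le> (\<Sum>i<m. expectation (\<lambda>\<omega>. (Z i \<omega>)\<^sup>2)) / t\<^sup>2"
proof -
  have "t\<^sup>2 * prob {\<omega>\<in>space M. \<exists>k\<le>m. t \<le> \<bar>psum k \<omega>\<bar>} \<le> t\<^sup>2 * prob (\<Union>k\<le>m. first_passage t k)"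
    using max_psum_subset_first_passage first_passage_events
    by (intro mult_left_mono finite_measure_mono) auto
  also have "\<dots> \<le> t\<^sup>2 * (\<Sum>k\<le>m. prob (first_passage t k))"
    using first_passage_events by (intro mult_left_mono measure_UNION_le) auto
  also have "\<dots> \<le> (\<Sum>k\<le>m. expectation (\<lambda>\<omega>. indicator (first_passage t k) \<omega> * (psum m \<omega>)\<^sup>2))"
    unfolding sum_distrib_left using \<open>0 < t\<close> by (intro sum_mono prob_first_passage_le) simp_all
  also have "\<dots> \<le> expectation (\<lambda>\<omega>. (psum m \<omega>)\<^sup>2)"
    by (rule sum_expectation_indicator_le[OF disjoint_family_first_passage])
       (auto intro: first_passage_events bounded_rv_intros)
  also have "\<dots> = (\<Sum>i<m. expectation (\<lambda>\<omega>. (Z i \<omega>)\<^sup>2))"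
    by (rule expectation_psum_squared)
  finally show ?thesis
    using \<open>0 < t\<close> by (simp add: field_simps)
qed

lemma expectation_Z_squared_le: "expectation (\<lambda>\<omega>. (Z i \<omega>)\<^sup>2) \<le> C\<^sup>2"
proof -
  have "AE \<omega> in M. (Z i \<omega>)\<^sup>2 \<le> C\<^sup>2"
    using AE_bounded[of i]
  proof eventually_elim
    case (elim \<omega>)
    then have "\<bar>Z i \<omega>\<bar>\<^sup>2 \<le> C\<^sup>2" by (intro power_mono) auto
    then show ?case by simp
  qed
  then have "expectation (\<lambda>\<omega>. (Z i \<omega>)\<^sup>2) \<le> expectation (\<lambda>\<omega>. C\<^sup>2)"
    by (intro integral_mono_AE bounded_rv_integrable bounded_rv_intros)
  then show ?thesis by (simp add: prob_space)
qed

corollary kolmogorov_inequality_bounded: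
  assumes "0 < t"
  shows "prob {\<omega>\<in>space M. \<exists>k\<le>m. t \<le> \<bar>psum k \<omega>\<bar>} \<le> real m * C\<^sup>2 / t\<^sup>2"
proof -
  have "(\<Sum>i<m. expectation (\<lambda>\<omega>. (Z i \<omega>)\<^sup>2)) \<le> real m * C\<^sup>2"
    using sum_bounded_above[of "{..<m}" "\<lambda>i. expectation (\<lambda>\<omega>. (Z i \<omega>)\<^sup>2)" "C\<^sup>2"]
    by (simp add: expectation_Z_squared_le)
  then show ?thesis
    using kolmogorov_inequality[OF assms, of m] \<open>0 < t\<close> by (smt (verit) divide_right_mono zero_le_power2)
qed

end

section \<open>The biased walk\<close>

text \<open>The paths with increments \<open>g\<close> that backtrack in the sense of \<open>backtracks\<close>, described
  through the increments outside \<open>[s, t)\<close> only: this makes backtracking independent of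
  the climb inside the window.\<close>

definition backtrack_paths :: "nat \<Rightarrow> nat \<Rightarrow> nat \<Rightarrow> (nat \<Rightarrow> int) set" where
  "backtrack_paths s t J = {g. (\<exists>r<s. (\<Sum>i\<in>{r..<s}. real_of_int (g i)) \<le> - real J)
     \<or> (\<exists>r>t. (\<Sum>i\<in>{t..<r}. real_of_int (g i)) \<le> - real J)}"

lemma sets_backtrack_paths:
  "space (PiM (- {s..<t}) (\<lambda>_. count_space UNIV)) \<inter> backtrack_paths s t J
    \<in> sets (PiM (- {s..<t}) (\<lambda>_. count_space UNIV))"
  (is "?S \<in> sets ?N")
proof -
  have [measurable]: "(\<lambda>g. \<Sum>i\<in>{r..<s}. real_of_int (g i)) \<in> borel_measurable ?N" if "r < s" for r
    by (rule measurable_sum_components) auto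
  have [measurable]: "(\<lambda>g. \<Sum>i\<in>{t..<r}. real_of_int (g i)) \<in> borel_measurable ?N" for r
    by (rule measurable_sum_components) auto
  have "?S = (\<Union>r\<in>{..<s}. {g\<in>space ?N. (\<Sum>i\<in>{r..<s}. real_of_int (g i)) \<le> - real J})
      \<union> (\<Union>r\<in>{t<..}. {g\<in>space ?N. (\<Sum>i\<in>{t..<r}. real_of_int (g i)) \<le> - real J})"
    by (auto simp: backtrack_paths_def)
  also have "\<dots> \<in> sets ?N"
    by (intro sets.Un sets.countable_UN') auto
  finally show ?thesis .
qed

locale biased_walk = prob_space +
  fixes X :: "nat \<Rightarrow> 'a \<Rightarrow> int" and \<beta> :: real
  assumes X_measurable [measurable]: "\<And>k. X k \<in> measurable M (count_space UNIV)"
    and X_indep: "indep_vars (\<lambda>_. count_space UNIV) X UNIV"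
    and prob_up: "\<And>k. prob {\<omega> \<in> space M. X k \<omega> = 1} = \<beta> / (\<beta> + 1)"
    and prob_down: "\<And>k. prob {\<omega> \<in> space M. X k \<omega> = -1} = 1 / (\<beta> + 1)"
    and \<beta>_gt_1: "1 < \<beta>"
begin

abbreviation \<upsilon> :: real where "\<upsilon> \<equiv> upsilon \<beta>"

abbreviation p :: real where "p \<equiv> \<beta> / (\<beta> + 1)"

lemma upsilon_pos: "0 < \<upsilon>" and upsilon_less_1: "\<upsilon> < 1"
  using \<beta>_gt_1 by (auto simp: upsilon_def field_simps)

lemma p_pos: "0 < p"
  using \<beta>_gt_1 by simp

lemma AE_step: "AE \<omega> in M. X k \<omega> = 1 \<or> X k \<omega> = -1"
proof -
  let ?up = "{\<omega>\<in>space M. X k \<omega> = 1}" and ?down = "{\<omega>\<in>space M. X k \<omega> = -1}"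
  have "prob (?up \<union> ?down) = prob ?up + prob ?down"
    by (intro finite_measure_Union) auto
  also have "\<dots> = 1"
    using \<beta>_gt_1 by (simp add: prob_up prob_down field_simps)
  finally have "AE \<omega> in M. \<omega> \<in> ?up \<union> ?down"
    by (intro AE_prob_1) auto
  then show ?thesis by auto
qed

lemma bounded_rv_step: "bounded_rv (\<lambda>\<omega>. real_of_int (X k \<omega>))"
proof -
  have "AE \<omega> in M. \<bar>real_of_int (X k \<omega>)\<bar> \<le> 1"
    using AE_step[of k] by eventually_elim auto
  then show ?thesis
    unfolding bounded_rv_def by auto
qed

lemma expectation_step: "expectation (\<lambda>\<omega>. real_of_int (X k \<omega>)) = \<upsilon>"
proof -
  let ?up = "{\<omega>\<in>space M. X k \<omega> = 1}" and ?down = "{\<omega>\<in>space M. X k \<omega> = -1}"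
  have "AE \<omega> in M. real_of_int (X k \<omega>) = indicator ?up \<omega> - indicator ?down \<omega>"
    using AE_step[of k] AE_space by eventually_elim (auto simp: indicator_def)
  then have "expectation (\<lambda>\<omega>. real_of_int (X k \<omega>)) = expectation (\<lambda>\<omega>. indicator ?up \<omega> - indicator ?down \<omega>)"
    by (intro integral_cong_AE) auto
  also have "\<dots> = \<beta> / (\<beta> + 1) - 1 / (\<beta> + 1)"
    by (subst Bochner_Integration.integral_diff)
       (auto simp: prob_up prob_down emeasure_eq_measure intro!: integrable_real_indicator)
  also have "\<dots> = \<upsilon>"
    by (simp add: upsilon_def diff_divide_distrib)
  finally show ?thesis .
qed

lemma indep_steps: "indep_vars (\<lambda>_. borel) (\<lambda>k \<omega>. real_of_int (X k \<omega>)) UNIV"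
  by (rule indep_vars_compose2[OF X_indep]) auto

lemma walk_diff: "r \<le> s \<Longrightarrow> walk X \<omega> s - walk X \<omega> r = (\<Sum>i\<in>{r..<s}. X i \<omega>)"
  unfolding walk_def using sum.atLeastLessThan_concat[of 0 r s "\<lambda>i. X i \<omega>"]
  by (simp add: lessThan_atLeast0)

lemma walk_measurable [measurable]: "(\<lambda>\<omega>. real_of_int (walk X \<omega> k)) \<in> borel_measurable M"
  unfolding walk_def of_int_sum by measurable

lemma card_regen_measurable [measurable]:
  "(\<lambda>\<omega>. real (card {m\<in>{1..N}. is_regen (walk X \<omega>) m})) \<in> borel_measurable M"
proof -
  have regen_iff: "is_regen (walk X \<omega>) m
      \<longleftrightarrow> (\<forall>r<m. \<forall>r'\<ge>m. real_of_int (walk X \<omega> r) \<noteq> real_of_int (walk X \<omega> r'))" for \<omega> m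
    by (simp add: is_regen_iff)
  have [measurable]: "Measurable.pred M (\<lambda>\<omega>. is_regen (walk X \<omega>) m)" for m
    unfolding regen_iff by measurable
  have "real (card {m\<in>{1..N}. is_regen (walk X \<omega>) m})
      = (\<Sum>m\<in>{1..N}. if is_regen (walk X \<omega>) m then 1 else 0)" for \<omega>
    by (simp add: sum.inter_filter[symmetric])
  then show ?thesis
    by (simp only:) measurable
qed

lemma prob_all_up:
  assumes "finite S"
  shows "prob {\<omega>\<in>space M. \<forall>i\<in>S. X i \<omega> = 1} = p ^ card S"
proof (cases "S = {}")
  case True
  then show ?thesis by (simp add: prob_space)
next
  case False
  have "prob (\<Inter>i\<in>S. X i -` {1} \<inter> space M) = (\<Prod>i\<in>S. prob (X i -` {1} \<inter> space M))"
    by (rule indep_varsD[OF X_indep False assms]) auto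
  also have "\<dots> = (\<Prod>i\<in>S. p)"
    by (intro prod.cong refl) (simp add: prob_up vimage_def Int_def conj_commute)
  also have "(\<Inter>i\<in>S. X i -` {1} \<inter> space M) = {\<omega>\<in>space M. \<forall>i\<in>S. X i \<omega> = 1}"
    using False by auto
  finally show ?thesis by simp
qed

lemma prob_walk_deviation_le:
  assumes "0 < t"
  shows "prob {\<omega>\<in>space M. \<exists>k\<le>m. t \<le> \<bar>real_of_int (walk X \<omega> k) - \<upsilon> * real k\<bar>} \<le> 4 * real m / t\<^sup>2"
proof -
  interpret centred: bounded_centred_indep_seq M "\<lambda>i \<omega>. real_of_int (X i \<omega>) - \<upsilon>" 2
  proof
    show "indep_vars (\<lambda>_. borel) (\<lambda>i \<omega>. real_of_int (X i \<omega>) - \<upsilon>) UNIV"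
      by (rule indep_vars_compose2[OF X_indep]) auto
    show "AE \<omega> in M. \<bar>real_of_int (X i \<omega>) - \<upsilon>\<bar> \<le> 2" for i
      using AE_step[of i] by eventually_elim (use upsilon_pos upsilon_less_1 in auto)
    show "expectation (\<lambda>\<omega>. real_of_int (X i \<omega>) - \<upsilon>) = 0" for i
      using bounded_rv_integrable[OF bounded_rv_step] by (simp add: expectation_step prob_space)
  qed
  have "centred.psum k \<omega> = real_of_int (walk X \<omega> k) - \<upsilon> * real k" for k \<omega>
    by (simp add: centred.psum_def walk_def sum_subtractf)
  then show ?thesis
    using centred.kolmogorov_inequality_bounded[OF assms, of m] by (simp add: mult.commute)
qed

definition backtrack_bound :: "nat \<Rightarrow> real" where
  "backtrack_bound J = 2 * exp (- real J * \<upsilon>) / (1 - exp (- \<upsilon>\<^sup>2 / 2))"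

lemma backtrack_bound_nonneg: "0 \<le> backtrack_bound J"
  using upsilon_pos by (simp add: backtrack_bound_def)

lemma backtrack_bound_tendsto_0: "backtrack_bound \<longlonglongrightarrow> 0"
proof -
  have "(\<lambda>J. exp (- \<upsilon>) ^ J) \<longlonglongrightarrow> 0"
    using upsilon_pos by (intro LIMSEQ_power_zero) auto
  moreover have "exp (- real J * \<upsilon>) = exp (- \<upsilon>) ^ J" for J
    by (simp add: exp_of_nat_mult[symmetric])
  ultimately have "(\<lambda>J. 2 * exp (- real J * \<upsilon>) / (1 - exp (- \<upsilon>\<^sup>2 / 2))) \<longlonglongrightarrow> 2 * 0 / (1 - exp (- \<upsilon>\<^sup>2 / 2))"
    by (intro tendsto_intros) (use upsilon_pos in auto)
  then show ?thesis
    by (simp add: backtrack_bound_def[abs_def])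
qed

lemma prob_window_sum_le:
  assumes "0 < d"
  shows "prob {\<omega>\<in>space M. (\<Sum>i\<in>{r..<r + d}. real_of_int (X i \<omega>)) \<le> - real J}
    \<le> exp (- real J * \<upsilon>) * exp (- \<upsilon>\<^sup>2 / 2) ^ d"
proof -
  have "AE \<omega> in M. real_of_int (X i \<omega>) \<in> {-1..1}" for i
    using AE_step[of i] by eventually_elim auto
  then have "prob {\<omega>\<in>space M. (\<Sum>i\<in>{r..<r + d}. real_of_int (X i \<omega>)) \<le> - real J}
      \<le> exp (- real J * \<upsilon>) * exp (- \<upsilon>\<^sup>2 / 2) ^ card {r..<r + d}"
    using assms upsilon_pos
    by (intro prob_sum_le_neg_le_exp[OF indep_vars_subset[OF indep_steps]]) (auto simp: expectation_step)
  then show ?thesis by simp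
qed

lemma backtracks_walk_iff:
  "backtracks (walk X \<omega>) s t J \<longleftrightarrow> (\<lambda>i\<in>- {s..<t}. X i \<omega>) \<in> backtrack_paths s t J"
proof -
  let ?g = "\<lambda>i\<in>- {s..<t}. X i \<omega>"
  have increment: "real_of_int (walk X \<omega> b) - real_of_int (walk X \<omega> a) = (\<Sum>i\<in>{a..<b}. real_of_int (?g i))"
    if "a \<le> b" "{a..<b} \<subseteq> - {s..<t}" for a b
  proof -
    have "(\<Sum>i\<in>{a..<b}. real_of_int (?g i)) = (\<Sum>i\<in>{a..<b}. real_of_int (X i \<omega>))"
      using that(2) by (intro sum.cong) auto
    then show ?thesis
      using arg_cong[OF walk_diff[OF that(1)], of real_of_int] by simp
  qed
  have before: "walk X \<omega> s + int J \<le> walk X \<omega> r \<longleftrightarrow> (\<Sum>i\<in>{r..<s}. real_of_int (?g i)) \<le> - real J"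
    if "r < s" for r
  proof -
    have "real_of_int (walk X \<omega> s) - real_of_int (walk X \<omega> r) = (\<Sum>i\<in>{r..<s}. real_of_int (?g i))"
      by (rule increment) (use that in auto)
    then show ?thesis by linarith
  qed
  have after: "walk X \<omega> r + int J \<le> walk X \<omega> t \<longleftrightarrow> (\<Sum>i\<in>{t..<r}. real_of_int (?g i)) \<le> - real J"
    if "t < r" for r
  proof -
    have "real_of_int (walk X \<omega> r) - real_of_int (walk X \<omega> t) = (\<Sum>i\<in>{t..<r}. real_of_int (?g i))"
      by (rule increment) (use that in auto)
    then show ?thesis by linarith
  qed
  show ?thesis
    unfolding backtracks_def backtrack_paths_def mem_Collect_eq using before after by blast
qed

lemma backtracks_events:
  "{\<omega>\<in>space M. backtracks (walk X \<omega>) s t J} \<in> events"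
proof -
  have "{\<omega>\<in>space M. backtracks (walk X \<omega>) s t J}
      = {\<omega>\<in>space M. (\<lambda>i\<in>- {s..<t}. X i \<omega>) \<in> space (PiM (- {s..<t}) (\<lambda>_. count_space UNIV)) \<inter> backtrack_paths s t J}"
    by (auto simp: backtracks_walk_iff space_PiM)
  also have "\<dots> \<in> events"
    using sets_backtrack_paths by measurable
  finally show ?thesis .
qed

lemma prob_backtracks_le: "prob {\<omega>\<in>space M. backtracks (walk X \<omega>) s t J} \<le> backtrack_bound J"
proof -
  let ?window = "\<lambda>a b. {\<omega>\<in>space M. (\<Sum>i\<in>{a..<b}. real_of_int (X i \<omega>)) \<le> - real J}"
  let ?e = "exp (- real J * \<upsilon>)" and ?x = "exp (- \<upsilon>\<^sup>2 / 2)"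
  have window_events: "?window a b \<in> events" for a b
    by measurable
  have "{\<omega>\<in>space M. backtracks (walk X \<omega>) s t J}
      \<subseteq> (\<Union>d\<in>{1..s}. ?window (s - d) s) \<union> (\<Union>d\<in>{1..}. ?window t (t + d))"
  proof
    fix \<omega> assume "\<omega> \<in> {\<omega>\<in>space M. backtracks (walk X \<omega>) s t J}"
    then have "\<omega> \<in> space M" and "(\<lambda>i\<in>- {s..<t}. X i \<omega>) \<in> backtrack_paths s t J"
      by (auto simp: backtracks_walk_iff)
    then show "\<omega> \<in> (\<Union>d\<in>{1..s}. ?window (s - d) s) \<union> (\<Union>d\<in>{1..}. ?window t (t + d))"
      unfolding backtrack_paths_def mem_Collect_eq
    proof (elim disjE exE conjE)
      fix r assume "r < s" "(\<Sum>i\<in>{r..<s}. real_of_int ((\<lambda>i\<in>- {s..<t}. X i \<omega>) i)) \<le> - real J"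
      then have "\<omega> \<in> ?window (s - (s - r)) s" "s - r \<in> {1..s}"
        using \<open>\<omega> \<in> space M\<close> by auto
      then show ?thesis by blast
    next
      fix r assume "t < r" "(\<Sum>i\<in>{t..<r}. real_of_int ((\<lambda>i\<in>- {s..<t}. X i \<omega>) i)) \<le> - real J"
      then have "\<omega> \<in> ?window t (t + (r - t))" "r - t \<in> {1..}"
        using \<open>\<omega> \<in> space M\<close> by auto
      then show ?thesis by blast
    qed
  qed
  then have "prob {\<omega>\<in>space M. backtracks (walk X \<omega>) s t J}
      \<le> prob ((\<Union>d\<in>{1..s}. ?window (s - d) s) \<union> (\<Union>d\<in>{1..}. ?window t (t + d)))"
    using window_events by (intro finite_measure_mono) auto
  also have "\<dots> \<le> prob (\<Union>d\<in>{1..s}. ?window (s - d) s) + prob (\<Union>d\<in>{1..}. ?window t (t + d))"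
    using window_events by (intro measure_Un_le) auto
  also have "\<dots> \<le> ?e / (1 - ?x) + ?e / (1 - ?x)"
  proof (intro add_mono measure_UN_le_geometric)
    show "prob (?window (s - d) s) \<le> ?e * ?x ^ d" if "d \<in> {1..s}" for d
      using prob_window_sum_le[of d "s - d" J] that by simp
    show "prob (?window t (t + d)) \<le> ?e * ?x ^ d" if "d \<in> {1..}" for d
      using prob_window_sum_le[of d t J] that by simp
  qed (use window_events upsilon_pos in auto)
  also have "\<dots> = backtrack_bound J"
    by (simp add: backtrack_bound_def)
  finally show ?thesis .
qed

lemma prob_climb_backtracks:
  "prob ({\<omega>\<in>space M. \<forall>i\<in>{s..<s + 2 * J}. X i \<omega> = 1} \<inter> {\<omega>\<in>space M. backtracks (walk X \<omega>) s (s + 2 * J) J})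
    = p ^ (2 * J) * prob {\<omega>\<in>space M. backtracks (walk X \<omega>) s (s + 2 * J) J}"
proof -
  let ?W = "{s..<s + 2 * J}" and ?N = "\<lambda>_::nat. count_space (UNIV :: int set)"
  let ?climb = "Pi\<^sub>E ?W (\<lambda>_. {1})" and ?dip = "space (PiM (- ?W) ?N) \<inter> backtrack_paths s (s + 2 * J) J"
  have climb_iff: "(\<forall>i\<in>?W. X i \<omega> = 1) \<longleftrightarrow> (\<lambda>i\<in>?W. X i \<omega>) \<in> ?climb" for \<omega>
    by (simp only: restrict_PiE_iff) simp
  have dip_iff: "backtracks (walk X \<omega>) s (s + 2 * J) J \<longleftrightarrow> (\<lambda>i\<in>- ?W. X i \<omega>) \<in> ?dip" for \<omega>
    by (simp add: backtracks_walk_iff space_PiM)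
  have "prob ({\<omega>\<in>space M. \<forall>i\<in>?W. X i \<omega> = 1} \<inter> {\<omega>\<in>space M. backtracks (walk X \<omega>) s (s + 2 * J) J})
      = prob {\<omega>\<in>space M. (\<lambda>i\<in>?W. X i \<omega>) \<in> ?climb \<and> (\<lambda>i\<in>- ?W. X i \<omega>) \<in> ?dip}"
    unfolding climb_iff dip_iff by (rule arg_cong[where f = prob]) auto
  also have "\<dots> = prob {\<omega>\<in>space M. (\<lambda>i\<in>?W. X i \<omega>) \<in> ?climb} * prob {\<omega>\<in>space M. (\<lambda>i\<in>- ?W. X i \<omega>) \<in> ?dip}"
    using sets_PiM_I_finite[of ?W "\<lambda>_. {1}" ?N]
    by (intro prob_Int_restrict_indep[OF X_indep _ _ _ _ sets_backtrack_paths]) auto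
  finally show ?thesis
    unfolding climb_iff[symmetric] dip_iff[symmetric] by (simp add: prob_all_up)
qed

lemma walk_climb:
  assumes "\<forall>i\<in>{s..<s + 2 * J}. X i \<omega> = 1" "i \<le> 2 * J"
  shows "walk X \<omega> (s + i) = walk X \<omega> s + int i"
proof -
  have "walk X \<omega> (s + i) - walk X \<omega> s = (\<Sum>k\<in>{s..<s + i}. X k \<omega>)"
    by (rule walk_diff) simp
  also have "\<dots> = (\<Sum>k\<in>{s..<s + i}. 1)"
    using assms by (intro sum.cong) auto
  finally show ?thesis by simp
qed

definition climb_event :: "nat \<Rightarrow> nat \<Rightarrow> 'a set" where
  "climb_event J l = {\<omega>\<in>space M. \<forall>i\<in>{2 * J * l..<2 * J * l + 2 * J}. X i \<omega> = 1}"

definition backtrack_event :: "nat \<Rightarrow> nat \<Rightarrow> 'a set" where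
  "backtrack_event J l = {\<omega>\<in>space M. backtracks (walk X \<omega>) (2 * J * l) (2 * J * l + 2 * J) J}"

lemma climb_event_events: "climb_event J l \<in> events"
  unfolding climb_event_def by measurable

lemma backtrack_event_events: "backtrack_event J l \<in> events"
  unfolding backtrack_event_def by (rule backtracks_events)

lemma prob_climb_event: "prob (climb_event J l) = p ^ (2 * J)"
  unfolding climb_event_def by (subst prob_all_up) auto

lemma prob_climb_event_Int:
  assumes "l \<noteq> l'"
  shows "prob (climb_event J l \<inter> climb_event J l') = (p ^ (2 * J))\<^sup>2"
proof -
  have apart: "2 * J * a + 2 * J \<le> 2 * J * b" if "a < b" for a b :: nat
    using mult_le_mono2[of "Suc a" b "2 * J"] that by simp
  have "{2 * J * l..<2 * J * l + 2 * J} \<inter> {2 * J * l'..<2 * J * l'+2 * J} = {}"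
    using apart[of l l'] apart[of l' l] \<open>l \<noteq> l'\<close> by (cases "l < l'") auto
  then have "card ({2 * J * l..<2 * J * l + 2 * J} \<union> {2 * J * l'..<2 * J * l'+2 * J}) = 2 * (2 * J)"
    by (simp add: card_Un_disjoint)
  moreover have "climb_event J l \<inter> climb_event J l'
      = {\<omega>\<in>space M. \<forall>i\<in>{2 * J * l..<2 * J * l + 2 * J} \<union> {2 * J * l'..<2 * J * l'+2 * J}. X i \<omega> = 1}"
    unfolding climb_event_def by auto
  ultimately show ?thesis
    by (simp add: prob_all_up power_mult[symmetric] ac_simps)
qed

lemma prob_climb_backtrack_event:
  "prob (climb_event J l \<inter> backtrack_event J l) \<le> p ^ (2 * J) * backtrack_bound J"
  unfolding climb_event_def backtrack_event_def prob_climb_backtracks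
  using prob_backtracks_le p_pos by (simp add: mult_left_mono)

lemma prob_few_climbs_le:
  assumes "1 \<le> L"
  shows "prob {\<omega>\<in>space M. real (card {l\<in>{..<L}. \<omega> \<in> climb_event J l}) \<le> real L * p ^ (2 * J) / 2}
    \<le> 4 / (real L * p ^ (2 * J))"
  using prob_card_events_le_half[of "{..<L}" "climb_event J" "p ^ (2 * J)"] assms p_pos
  by (simp add: climb_event_events prob_climb_event prob_climb_event_Int lessThan_empty_iff)

lemma prob_many_backtracking_climbs_le:
  assumes "1 \<le> L"
  shows "prob {\<omega>\<in>space M. real L * p ^ (2 * J) / 4
      \<le> real (card {l\<in>{..<L}. \<omega> \<in> climb_event J l \<inter> backtrack_event J l})}
    \<le> 4 * backtrack_bound J"
proof -
  have cancel: "x * (y * d) / (x * y / 4) = 4 * d" if "0 < x * y" for x y d :: real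
  proof -
    from that have "x \<noteq> 0" "y \<noteq> 0" by auto
    then show ?thesis by (simp add: field_simps)
  qed
  have "0 < real L * p ^ (2 * J)"
    using assms p_pos by simp
  then have "prob {\<omega>\<in>space M. real L * p ^ (2 * J) / 4
      \<le> real (card {l\<in>{..<L}. \<omega> \<in> climb_event J l \<inter> backtrack_event J l})}
    \<le> (\<Sum>l<L. prob (climb_event J l \<inter> backtrack_event J l)) / (real L * p ^ (2 * J) / 4)"
    by (intro prob_card_events_ge_le) (auto intro: climb_event_events backtrack_event_events)
  also have "\<dots> \<le> real L * (p ^ (2 * J) * backtrack_bound J) / (real L * p ^ (2 * J) / 4)"
    using sum_bounded_above[of "{..<L}", OF prob_climb_backtrack_event] \<open>0 < real L * p ^ (2 * J)\<close>
    by (intro divide_right_mono) auto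
  also have "\<dots> = 4 * backtrack_bound J"
    using \<open>0 < real L * p ^ (2 * J)\<close> by (rule cancel)
  finally show ?thesis .
qed

lemma card_climb_events_le:
  assumes "1 \<le> J" "\<omega> \<in> space M"
  shows "card {l\<in>{..<L}. \<omega> \<in> climb_event J l}
    \<le> card {l\<in>{..<L}. \<omega> \<in> climb_event J l \<inter> backtrack_event J l}
      + card {m\<in>{1..2 * J * L}. is_regen (walk X \<omega>) m}"
proof -
  have "walk X \<omega> (2 * J * l + i) = walk X \<omega> (2 * J * l) + int i" if "\<omega> \<in> climb_event J l" "i \<le> 2 * J" for l i
    using that by (intro walk_climb) (auto simp: climb_event_def)
  from card_climbs_le[OF \<open>1 \<le> J\<close> this, where L = L] show ?thesis
    using \<open>\<omega> \<in> space M\<close> by (simp add: backtrack_event_def)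
qed

lemma prob_few_regen_le:
  assumes "1 \<le> J" "1 \<le> L"
  shows "prob {\<omega>\<in>space M. real (card {m\<in>{1..2 * J * L}. is_regen (walk X \<omega>) m}) \<le> real L * p ^ (2 * J) / 4}
    \<le> 4 / (real L * p ^ (2 * J)) + 4 * backtrack_bound J"
proof -
  let ?q = "p ^ (2 * J)"
  let ?few = "{\<omega>\<in>space M. real (card {m\<in>{1..2 * J * L}. is_regen (walk X \<omega>) m}) \<le> real L * ?q / 4}"
  let ?few_climbs = "{\<omega>\<in>space M. real (card {l\<in>{..<L}. \<omega> \<in> climb_event J l}) \<le> real L * ?q / 2}"
  let ?many_backtracks = "{\<omega>\<in>space M. real L * ?q / 4
    \<le> real (card {l\<in>{..<L}. \<omega> \<in> climb_event J l \<inter> backtrack_event J l})}"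
  have few_subset: "?few \<subseteq> ?few_climbs \<union> ?many_backtracks"
  proof
    fix \<omega> assume few: "\<omega> \<in> ?few"
    then have "real (card {l\<in>{..<L}. \<omega> \<in> climb_event J l})
        \<le> real (card {l\<in>{..<L}. \<omega> \<in> climb_event J l \<inter> backtrack_event J l})
          + real (card {m\<in>{1..2 * J * L}. is_regen (walk X \<omega>) m})"
      using of_nat_mono[OF card_climb_events_le[OF \<open>1 \<le> J\<close>, of \<omega> L], where 'a = real] by simp
    with few show "\<omega> \<in> ?few_climbs \<union> ?many_backtracks"
      by simp linarith
  qed
  have [measurable]: "(\<lambda>\<omega>. real (card {l\<in>{..<L}. \<omega> \<in> climb_event J l})) \<in> borel_measurable M"
    "(\<lambda>\<omega>. real (card {l\<in>{..<L}. \<omega> \<in> climb_event J l \<inter> backtrack_event J l})) \<in> borel_measurable M"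
    using bounded_rv_card_events[of "{..<L}"] climb_event_events backtrack_event_events
    by (auto simp: bounded_rv_def)
  have events: "?few_climbs \<in> events" "?many_backtracks \<in> events"
    by measurable
  have "prob ?few \<le> prob (?few_climbs \<union> ?many_backtracks)"
    by (rule finite_measure_mono[OF few_subset sets.Un[OF events]])
  also have "\<dots> \<le> prob ?few_climbs + prob ?many_backtracks"
    by (rule measure_Un_le[OF events])
  also have "\<dots> \<le> 4 / (real L * ?q) + 4 * backtrack_bound J"
    using assms by (intro add_mono prob_few_climbs_le prob_many_backtracking_climbs_le)
  finally show ?thesis .
qed

lemma sup_sum_chi_minus_gt_subset:
  assumes "0 \<le> T" "a \<noteq> 0" and enough: "real n * T \<le> real L * p ^ (2 * J) / 4"
  shows "{\<omega>\<in>space M. \<epsilon> < (SUP t\<in>{0..T}. \<bar>\<Sum>j\<in>{2..nat \<lfloor>real n * t\<rfloor>}. chi_minus \<beta> (walk X \<omega>) j / a\<bar>)}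
    \<subseteq> {\<omega>\<in>space M. real (card {m\<in>{1..2 * J * L}. is_regen (walk X \<omega>) m}) \<le> real L * p ^ (2 * J) / 4}
      \<union> {\<omega>\<in>space M. \<exists>k\<le>2 * J * L. \<epsilon> * \<bar>a\<bar> / 2 \<le> \<bar>real_of_int (walk X \<omega> k) - \<upsilon> * real k\<bar>}"
proof (rule subsetI, rule ccontr)
  fix \<omega>
  assume \<omega>: "\<omega> \<in> {\<omega>\<in>space M. \<epsilon> < (SUP t\<in>{0..T}. \<bar>\<Sum>j\<in>{2..nat \<lfloor>real n * t\<rfloor>}. chi_minus \<beta> (walk X \<omega>) j / a\<bar>)}"
    and "\<omega> \<notin> {\<omega>\<in>space M. real (card {m\<in>{1..2 * J * L}. is_regen (walk X \<omega>) m}) \<le> real L * p ^ (2 * J) / 4}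
      \<union> {\<omega>\<in>space M. \<exists>k\<le>2 * J * L. \<epsilon> * \<bar>a\<bar> / 2 \<le> \<bar>real_of_int (walk X \<omega> k) - \<upsilon> * real k\<bar>}"
  then have many: "real n * T \<le> real (card {m\<in>{1..2 * J * L}. is_regen (walk X \<omega>) m})"
    and close: "\<And>k. k \<le> 2 * J * L \<Longrightarrow> \<bar>real_of_int (walk X \<omega> k) - \<upsilon> * real k\<bar> \<le> \<epsilon> * \<bar>a\<bar> / 2"
    using enough by auto
  have "(SUP t\<in>{0..T}. \<bar>\<Sum>j\<in>{2..nat \<lfloor>real n * t\<rfloor>}. chi_minus \<beta> (walk X \<omega>) j / a\<bar>)
      \<le> 2 * (\<epsilon> * \<bar>a\<bar> / 2) / \<bar>a\<bar>"
    using many \<open>0 \<le> T\<close> close by (rule SUP_sum_chi_minus_le)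
  with \<omega> \<open>a \<noteq> 0\<close> show False
    by simp
qed

lemma prob_sup_sum_chi_minus_gt_le:
  assumes "1 \<le> J" "1 \<le> L" "0 \<le> T" "0 < \<epsilon>"
    and enough: "real n * T \<le> real L * p ^ (2 * J) / 4"
  shows "prob {\<omega>\<in>space M. \<epsilon> < (SUP t\<in>{0..T}. \<bar>\<Sum>j\<in>{2..nat \<lfloor>real n * t\<rfloor>}. chi_minus \<beta> (walk X \<omega>) j / a\<bar>)}
    \<le> 4 / (real L * p ^ (2 * J)) + 4 * backtrack_bound J + 32 * real J * real L / (\<epsilon> * a)\<^sup>2"
proof (cases "a = 0")
  case True \<comment> \<open>the event is empty, as every summand \<open>\<chi>\<^sup>-\<^sub>j / 0\<close> is \<open>0\<close>\<close>
  then have "(SUP t\<in>{0..T}. \<bar>\<Sum>j\<in>{2..nat \<lfloor>real n * t\<rfloor>}. chi_minus \<beta> (walk X \<omega>) j / a\<bar>) = 0" for \<omega>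
    using \<open>0 \<le> T\<close> by simp
  then show ?thesis
    using True \<open>0 < \<epsilon>\<close> backtrack_bound_nonneg[of J] p_pos by simp
next
  case False
  let ?few = "{\<omega>\<in>space M. real (card {m\<in>{1..2 * J * L}. is_regen (walk X \<omega>) m}) \<le> real L * p ^ (2 * J) / 4}"
  let ?deviates = "{\<omega>\<in>space M. \<exists>k\<le>2 * J * L. \<epsilon> * \<bar>a\<bar> / 2 \<le> \<bar>real_of_int (walk X \<omega> k) - \<upsilon> * real k\<bar>}"
  have events: "?few \<in> events" "?deviates \<in> events"
    by measurable
  have "prob {\<omega>\<in>space M. \<epsilon> < (SUP t\<in>{0..T}. \<bar>\<Sum>j\<in>{2..nat \<lfloor>real n * t\<rfloor>}. chi_minus \<beta> (walk X \<omega>) j / a\<bar>)}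
      \<le> prob (?few \<union> ?deviates)"
    using sup_sum_chi_minus_gt_subset[OF \<open>0 \<le> T\<close> False enough]
    by (rule finite_measure_mono[OF _ sets.Un[OF events]])
  also have "\<dots> \<le> prob ?few + prob ?deviates"
    by (rule measure_Un_le[OF events])
  also have "\<dots> \<le> (4 / (real L * p ^ (2 * J)) + 4 * backtrack_bound J) + 4 * real (2 * J * L) / (\<epsilon> * \<bar>a\<bar> / 2)\<^sup>2"
    using assms False by (intro add_mono prob_few_regen_le prob_walk_deviation_le) auto
  also have "4 * real (2 * J * L) / (\<epsilon> * \<bar>a\<bar> / 2)\<^sup>2 = 32 * real J * real L / (\<epsilon> * a)\<^sup>2"
    by (simp add: power2_eq_square field_simps)
  finally show ?thesis by simp
qed

lemma backtrack_bound_eventually_small: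
  assumes "0 < \<gamma>"
  obtains J where "1 \<le> J" "4 * backtrack_bound J \<le> \<gamma>"
proof -
  have "\<forall>\<^sub>F J in sequentially. backtrack_bound J < \<gamma> / 4"
    using order_tendstoD(2)[OF backtrack_bound_tendsto_0, of "\<gamma> / 4"] assms by simp
  then obtain J0 where "\<And>J. J0 \<le> J \<Longrightarrow> backtrack_bound J < \<gamma> / 4"
    by (auto simp: eventually_sequentially)
  then have "backtrack_bound (max 1 J0) < \<gamma> / 4"
    by simp
  then show ?thesis
    by (auto intro!: that[of "max 1 J0"])
qed

theorem sup_sum_chi_minus_tendsto_0:
  assumes "0 \<le> T" and a: "(\<lambda>n. sqrt (real n) / a n) \<longlonglongrightarrow> 0" and "0 < \<epsilon>"
  shows "(\<lambda>n. prob {\<omega>\<in>space M.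
    \<epsilon> < (SUP t\<in>{0..T}. \<bar>\<Sum>j\<in>{2..nat \<lfloor>real n * t\<rfloor>}. chi_minus \<beta> (walk X \<omega>) j / a n\<bar>)}) \<longlonglongrightarrow> 0"
proof (rule tendsto_0_if_eventually_le_plus_tendsto_0)
  fix \<gamma> :: real assume "0 < \<gamma>"
  then obtain J where "1 \<le> J" "4 * backtrack_bound J \<le> \<gamma>"
    by (rule backtrack_bound_eventually_small)
  define q where "q = p ^ (2 * J)"
  \<comment> \<open>ensures \<open>nT \<le> Lq/4\<close> for \<open>L = c n\<close> windows\<close>
  define c where "c = nat \<lceil>4 * T / q\<rceil> + 1"
  have "0 < q" using p_pos by (simp add: q_def)
  have "4 * T / q \<le> real c"
    unfolding c_def by linarith
  then have c: "T \<le> real c * q / 4"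
    using \<open>0 < q\<close> by (simp add: field_simps)
  define g where "g n = 4 / (real c * q) * inverse (real n) + 32 * real J * real c / \<epsilon>\<^sup>2 * (sqrt (real n) / a n)\<^sup>2"
    for n
  have "g \<longlonglongrightarrow> 4 / (real c * q) * 0 + 32 * real J * real c / \<epsilon>\<^sup>2 * 0\<^sup>2"
    unfolding g_def by (intro tendsto_intros lim_inverse_n a)
  moreover have "\<forall>\<^sub>F n in sequentially. prob {\<omega>\<in>space M.
      \<epsilon> < (SUP t\<in>{0..T}. \<bar>\<Sum>j\<in>{2..nat \<lfloor>real n * t\<rfloor>}. chi_minus \<beta> (walk X \<omega>) j / a n\<bar>)} \<le> \<gamma> + g n"
    using eventually_ge_at_top[of 1]
  proof eventually_elim
    case (elim n)
    have "real n * T \<le> real (c * n) * q / 4"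
      using mult_left_mono[OF c, of "real n"] by (simp add: algebra_simps)
    then have "prob {\<omega>\<in>space M.
        \<epsilon> < (SUP t\<in>{0..T}. \<bar>\<Sum>j\<in>{2..nat \<lfloor>real n * t\<rfloor>}. chi_minus \<beta> (walk X \<omega>) j / a n\<bar>)}
      \<le> 4 / (real (c * n) * q) + 4 * backtrack_bound J + 32 * real J * real (c * n) / (\<epsilon> * a n)\<^sup>2"
      unfolding q_def using \<open>1 \<le> J\<close> elim \<open>0 \<le> T\<close> \<open>0 < \<epsilon>\<close>
      by (intro prob_sup_sum_chi_minus_gt_le) (auto simp: c_def)
    also have "4 / (real (c * n) * q) = 4 / (real c * q) * inverse (real n)"
      by (simp add: divide_inverse)
    also have "32 * real J * real (c * n) / (\<epsilon> * a n)\<^sup>2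
        = 32 * real J * real c / \<epsilon>\<^sup>2 * (sqrt (real n) / a n)\<^sup>2"
      by (simp add: power_divide power_mult_distrib)
    finally show ?case
      using \<open>4 * backtrack_bound J \<le> \<gamma>\<close> by (simp add: g_def)
  qed
  ultimately show "\<exists>g. g \<longlonglongrightarrow> 0 \<and> (\<forall>\<^sub>F n in sequentially. prob {\<omega>\<in>space M.
      \<epsilon> < (SUP t\<in>{0..T}. \<bar>\<Sum>j\<in>{2..nat \<lfloor>real n * t\<rfloor>}. chi_minus \<beta> (walk X \<omega>) j / a n\<bar>)} \<le> \<gamma> + g n)"
    by auto
qed simp

end

theorem lemma2:
  fixes M :: "'a measure" and X :: "nat \<Rightarrow> 'a \<Rightarrow> int"
    and \<beta> T :: real and a :: "nat \<Rightarrow> real"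
  assumes "prob_space M"
    and meas: "\<And>k. X k \<in> measurable M (count_space UNIV)"
    and indep: "prob_space.indep_vars M (\<lambda>_. count_space UNIV) X UNIV"
    and up: "\<And>k. measure M {\<omega> \<in> space M. X k \<omega> = 1} = \<beta> / (\<beta> + 1)"
    and down: "\<And>k. measure M {\<omega> \<in> space M. X k \<omega> = -1} = 1 / (\<beta> + 1)"
    and "\<beta> > 1" and "0 \<le> T"
    and "(\<lambda>n. sqrt (real n) / a n) \<longlonglongrightarrow> 0"
  shows "\<forall>\<epsilon>>0. (\<lambda>n. measure M {\<omega> \<in> space M.
            (SUP t\<in>{0..T}. \<bar>\<Sum>j\<in>{2..nat \<lfloor>real n * t\<rfloor>}.
                chi_minus \<beta> (walk X \<omega>) j / a n\<bar>) > \<epsilon>}) \<longlonglongrightarrow> 0"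
proof -
  interpret biased_walk M X \<beta>
    using assms by (simp add: biased_walk_def biased_walk_axioms_def)
  show ?thesis
    using sup_sum_chi_minus_tendsto_0 assms(7,8) by simp
qed

end
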